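(* Let $m \ge 4$ and $n \ge 3$ be integers and let $d$ be a positive integer. Then there exists a matrix $A \in \mathbb{R}^{[m]\times[n]}$ such that (i) $A$ does not have an elimination ordering, and (ii) for every vector $b \in \mathbb{R}^{[m]}$, the solution graph $G(R(A,b))$ is connected.
   Context: Fix a positive integer $d$ and let $D=\{0,1,\dots,d\}$; $[n]=\{1,\dots,n\}$. For $A\in\mathbb{R}^{[m]\times[n]}$ and $b\in\mathbb{R}^{[m]}$, $R(A,b)=\{x\in D^{[n]} : Ax\ge b\}$ is the set of feasible solutions of the integer linear system $(A,b)$. For $R\subseteq D^{[n]}$, the solution graph $G(R)$ is the undirected graph with vertex set $R$ in which $x,y$ are adjacent iff they differ in exactly one coordinate (Hamming distance $1$). A matrix $A=(a_{ij})$ with column index set $J$ can be eliminated at column $j\in J$ if (i) for every row $i$ with $a_{ij}>0$ we have $a_{ij'}=0$ for all $j'\in J\setminus\{j\}$, or (ii) for every row $i$ with $a_{ij}<0$ we have $a_{ij'}=0$ for all $j'\in J\setminus\{j\}$. For $J'\subseteq [n]$, $\mathrm{elm}(A,J')$ denotes the submatrix of $A$ obtained by deleting the columns indexed by $J'$. A sequence $(j_1,\dots,j_n)$ of the elements of $[n]$ is an elimination ordering (EO) of $A\in\mathbb{R}^{[m]\times[n]}$ if for every $t\in[n]$ the matrix $\mathrm{elm}(A,\{j_1,\dots,j_{t-1}\})$ can be eliminated at column $j_t$. *)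

theory Defs
  imports Complex_Main
begin

text \<open>Matrices A in R^{[m] x [n]} are functions nat => nat => real, read only on
  rows 1..m and columns 1..n; vectors b are nat => real read on 1..m.
  Points of D^{[n]} (D = {0..d}) are functions nat => int with values in
  {0..d} on 1..n and 0 outside (so that the representation is unique).\<close>

definition box :: "nat \<Rightarrow> nat \<Rightarrow> (nat \<Rightarrow> int) set" where
  "box d n = {x. (\<forall>j\<in>{1..n}. 0 \<le> x j \<and> x j \<le> int d) \<and> (\<forall>j. j \<notin> {1..n} \<longrightarrow> x j = 0)}"

definition feasible_set ::
  "nat \<Rightarrow> nat \<Rightarrow> nat \<Rightarrow> (nat \<Rightarrow> nat \<Rightarrow> real) \<Rightarrow> (nat \<Rightarrow> real) \<Rightarrow> (nat \<Rightarrow> int) set" where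
  "feasible_set d m n A b =
     {x \<in> box d n. \<forall>i\<in>{1..m}. (\<Sum>j=1..n. A i j * of_int (x j)) \<ge> b i}"

definition hamming_adj :: "nat \<Rightarrow> (nat \<Rightarrow> int) \<Rightarrow> (nat \<Rightarrow> int) \<Rightarrow> bool" where
  "hamming_adj n x y \<longleftrightarrow> card {j \<in> {1..n}. x j \<noteq> y j} = 1"

definition solution_graph_connected :: "nat \<Rightarrow> (nat \<Rightarrow> int) set \<Rightarrow> bool" where
  "solution_graph_connected n R \<longleftrightarrow>
     (\<forall>x\<in>R. \<forall>y\<in>R. (\<lambda>u v. u \<in> R \<and> v \<in> R \<and> hamming_adj n u v)\<^sup>*\<^sup>* x y)"

definition can_eliminate :: "nat \<Rightarrow> (nat \<Rightarrow> nat \<Rightarrow> real) \<Rightarrow> nat set \<Rightarrow> nat \<Rightarrow> bool" where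
  "can_eliminate m A J j \<longleftrightarrow>
     (\<forall>i\<in>{1..m}. A i j > 0 \<longrightarrow> (\<forall>j'\<in>J - {j}. A i j' = 0)) \<or>
     (\<forall>i\<in>{1..m}. A i j < 0 \<longrightarrow> (\<forall>j'\<in>J - {j}. A i j' = 0))"

text \<open>js = (j_1,...,j_n) is an elimination ordering of A in R^{[m] x [n]}:
  elm(A,{j_1..j_{t-1}}) has column set [n] - {j_1..j_{t-1}}.\<close>
definition elimination_ordering :: "nat \<Rightarrow> nat \<Rightarrow> (nat \<Rightarrow> nat \<Rightarrow> real) \<Rightarrow> nat list \<Rightarrow> bool" where
  "elimination_ordering m n A js \<longleftrightarrow>
     distinct js \<and> set js = {1..n} \<and>
     (\<forall>t < n. can_eliminate m A ({1..n} - set (take t js)) (js ! t))"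

definition has_elimination_ordering :: "nat \<Rightarrow> nat \<Rightarrow> (nat \<Rightarrow> nat \<Rightarrow> real) \<Rightarrow> bool" where
  "has_elimination_ordering m n A \<longleftrightarrow> (\<exists>js. elimination_ordering m n A js)"

end

theory Submission
  imports Defs
begin

text \<open>The witness involves only the first three columns; its rows 1 to 4 read
  \<open>x\<^sub>1 + x\<^sub>2 \<le> -b\<^sub>1\<close>, \<open>x\<^sub>2 - x\<^sub>1 \<ge> b\<^sub>2\<close>,
  \<open>x\<^sub>1 - x\<^sub>3 \<ge> b\<^sub>3\<close>, \<open>x\<^sub>1 + x\<^sub>3 \<ge> b\<^sub>4\<close>.
  Each of the columns 1, 2, 3 has a positive and a negative entry in rows that also involve
  another of these columns, so whichever of them comes first in an ordering cannot be eliminated.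
  For connectivity, fix \<open>x\<^sub>1\<close>: the admissible \<open>x\<^sub>2\<close> form an interval
  that shrinks as \<open>x\<^sub>1\<close> grows, the admissible \<open>x\<^sub>3\<close> one that grows.
  So to walk from \<open>x\<close> to \<open>y\<close> with \<open>x\<^sub>1 \<le> y\<^sub>1\<close>, change
  \<open>x\<^sub>2\<close> to \<open>y\<^sub>2\<close>, then \<open>x\<^sub>1\<close> to \<open>y\<^sub>1\<close>, then
  \<open>x\<^sub>3\<close> to \<open>y\<^sub>3\<close>, and finally the unconstrained coordinates one at a time.\<close>

definition solution_edge :: "nat \<Rightarrow> (nat \<Rightarrow> int) set \<Rightarrow> (nat \<Rightarrow> int) \<Rightarrow> (nat \<Rightarrow> int) \<Rightarrow> bool" where
  "solution_edge n R u v \<longleftrightarrow> u \<in> R \<and> v \<in> R \<and> hamming_adj n u v"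

lemma solution_graph_connected_iff:
  "solution_graph_connected n R \<longleftrightarrow> (\<forall>x\<in>R. \<forall>y\<in>R. (solution_edge n R)\<^sup>*\<^sup>* x y)"
  unfolding solution_graph_connected_def solution_edge_def[abs_def] ..

lemma symp_solution_edge: "symp (solution_edge n R)"
proof (rule sympI)
  fix u v assume "solution_edge n R u v"
  moreover have "{j \<in> {1..n}. u j \<noteq> v j} = {j \<in> {1..n}. v j \<noteq> u j}" by auto
  ultimately show "solution_edge n R v u" unfolding solution_edge_def hamming_adj_def by simp
qed

lemma solution_path_single_coordinate:
  assumes "u \<in> R" "v \<in> R" "j \<in> {1..n}" "\<And>k. k \<noteq> j \<Longrightarrow> u k = v k"
  shows "(solution_edge n R)\<^sup>*\<^sup>* u v"
proof (cases "u j = v j")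
  case True
  then have "u = v" using assms(4) by (metis ext)
  then show ?thesis by simp
next
  case False
  then have "{k \<in> {1..n}. u k \<noteq> v k} = {j}" using assms(3,4) by auto
  then show ?thesis using assms(1,2) unfolding solution_edge_def hamming_adj_def by auto
qed

lemma box_fun_upd:
  assumes "x \<in> box d n" "j \<in> {1..n}" "0 \<le> c" "c \<le> int d"
  shows "x(j := c) \<in> box d n"
  using assms unfolding box_def by auto

lemma feasible_set_change_zero_columns:
  assumes x: "x \<in> feasible_set d m n A b" and z: "z \<in> box d n"
    and zero: "\<And>j. j \<in> {1..n} \<Longrightarrow> z j \<noteq> x j \<Longrightarrow> \<forall>i\<in>{1..m}. A i j = 0"
  shows "z \<in> feasible_set d m n A b"
proof -
  have "(\<Sum>j=1..n. A i j * of_int (z j)) = (\<Sum>j=1..n. A i j * of_int (x j))" if "i \<in> {1..m}" for i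
    using zero that by (intro sum.cong) fastforce+
  then show ?thesis using x z unfolding feasible_set_def by auto
qed

lemma solution_path_zero_columns:
  assumes x: "x \<in> feasible_set d m n A b" and y: "y \<in> feasible_set d m n A b"
    and zero: "\<And>j. j \<in> {1..n} \<Longrightarrow> x j \<noteq> y j \<Longrightarrow> \<forall>i\<in>{1..m}. A i j = 0"
  shows "(solution_edge n (feasible_set d m n A b))\<^sup>*\<^sup>* x y"
proof -
  let ?R = "feasible_set d m n A b"
  define z where "z k = (\<lambda>j. if j \<le> k then y j else x j)" for k
  have xy_box: "x \<in> box d n" "y \<in> box d n" using x y unfolding feasible_set_def by auto
  then have "z k \<in> box d n" for k unfolding z_def box_def by auto
  then have z_feasible: "z k \<in> ?R" for k
    by (rule feasible_set_change_zero_columns[OF x]) (use zero in \<open>auto simp: z_def split: if_splits\<close>)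
  have "(solution_edge n ?R)\<^sup>*\<^sup>* x (z k)" if "k \<le> n" for k
    using that
  proof (induction k)
    case 0
    have "x 0 = y 0" using xy_box unfolding box_def by auto
    then have "z 0 = x" unfolding z_def by auto
    then show ?case by simp
  next
    case (Suc k)
    have "(solution_edge n ?R)\<^sup>*\<^sup>* (z k) (z (Suc k))"
      by (rule solution_path_single_coordinate[OF z_feasible z_feasible, of "Suc k"])
        (use Suc.prems in \<open>auto simp: z_def\<close>)
    then show ?case using Suc by (meson Suc_leD rtranclp_trans)
  qed
  moreover have "z n = y" using xy_box unfolding z_def box_def by auto
  ultimately show ?thesis by auto
qed

definition blocked_columns :: "nat \<Rightarrow> (nat \<Rightarrow> nat \<Rightarrow> real) \<Rightarrow> nat set \<Rightarrow> bool" where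
  "blocked_columns m A S \<longleftrightarrow>
     (\<forall>j\<in>S. (\<exists>i\<in>{1..m}. A i j > 0 \<and> (\<exists>k\<in>S - {j}. A i k \<noteq> 0)) \<and>
            (\<exists>i\<in>{1..m}. A i j < 0 \<and> (\<exists>k\<in>S - {j}. A i k \<noteq> 0)))"

lemma blocked_columns_not_can_eliminate:
  assumes "blocked_columns m A S" "S \<subseteq> J" "j \<in> S"
  shows "\<not> can_eliminate m A J j"
  using assms unfolding blocked_columns_def can_eliminate_def by blast

lemma blocked_columns_no_elimination_ordering:
  assumes blocked: "blocked_columns m A S" and "S \<subseteq> {1..n}" "S \<noteq> {}"
  shows "\<not> has_elimination_ordering m n A"
proof
  assume "has_elimination_ordering m n A"
  then obtain js where js: "elimination_ordering m n A js"
    unfolding has_elimination_ordering_def by blast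
  have "length js = n" using js distinct_card unfolding elimination_ordering_def by fastforce
  define t where "t = length (takeWhile (\<lambda>j. j \<notin> S) js)"
  have "\<exists>j\<in>set js. j \<in> S" using js assms(2,3) unfolding elimination_ordering_def by auto
  then have "t < n" unfolding t_def using \<open>length js = n\<close>
    by (metis length_takeWhile_le takeWhile_eq_all_conv takeWhile_eq_take le_neq_implies_less take_all)
  then have "js ! t \<in> S" unfolding t_def using \<open>length js = n\<close> nth_length_takeWhile by fastforce
  have "set (take t js) \<inter> S = {}"
    unfolding t_def using takeWhile_eq_take set_takeWhileD by (metis disjoint_iff)
  then have "S \<subseteq> {1..n} - set (take t js)" using assms(2) by blast
  then have "\<not> can_eliminate m A ({1..n} - set (take t js)) (js ! t)"
    using blocked_columns_not_can_eliminate[OF blocked] \<open>js ! t \<in> S\<close> by blast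
  then show False using js \<open>t < n\<close> unfolding elimination_ordering_def by blast
qed

definition example_matrix :: "nat \<Rightarrow> nat \<Rightarrow> real" where
  "example_matrix i j =
     (if (i, j) \<in> {(1, 1), (1, 2), (2, 1), (3, 3)} then -1
      else if (i, j) \<in> {(2, 2), (3, 1), (4, 1), (4, 3)} then 1 else 0)"

lemma example_matrix_zero_column: "j \<notin> {1, 2, 3} \<Longrightarrow> example_matrix i j = 0"
  unfolding example_matrix_def by auto

lemma blocked_columns_example_matrix:
  assumes "m \<ge> 4"
  shows "blocked_columns m example_matrix {1, 2, 3}"
proof -
  have rows: "1 \<in> {1..m}" "2 \<in> {1..m}" "3 \<in> {1..m}" "4 \<in> {1..m}" using assms by auto
  show ?thesis unfolding blocked_columns_def ball_simps
    by (intro conjI TrueI)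
      (rule bexI[OF _ rows(1)] bexI[OF _ rows(2)] bexI[OF _ rows(3)] bexI[OF _ rows(4)],
        simp add: example_matrix_def)+
qed

lemma example_matrix_row_sum:
  assumes "n \<ge> 3"
  shows "(\<Sum>j=1..n. example_matrix i j * of_int (x j)) =
    (if i = 1 then - x 1 - x 2
     else if i = 2 then x 2 - x 1
     else if i = 3 then x 1 - x 3
     else if i = 4 then x 1 + x 3 else 0)"
proof -
  have "(\<Sum>j=1..n. example_matrix i j * of_int (x j)) = (\<Sum>j\<in>{1, 2, 3}. example_matrix i j * of_int (x j))"
    using assms example_matrix_zero_column by (intro sum.mono_neutral_right) auto
  then show ?thesis by (simp add: example_matrix_def)
qed

lemma feasible_set_example_matrix_iff:
  assumes "m \<ge> 4" "n \<ge> 3"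
  shows "x \<in> feasible_set d m n example_matrix b \<longleftrightarrow> x \<in> box d n \<and>
    b 1 \<le> - x 1 - x 2 \<and> b 2 \<le> x 2 - x 1 \<and> b 3 \<le> x 1 - x 3 \<and> b 4 \<le> x 1 + x 3 \<and>
    (\<forall>i\<in>{5..m}. b i \<le> 0)"
proof -
  have "{1..m} = {1, 2, 3, 4} \<union> {5..m}" using assms(1) by auto
  then show ?thesis unfolding feasible_set_def example_matrix_row_sum[OF assms(2)] by auto
qed

lemma solution_path_example_matrix:
  assumes "m \<ge> 4" "n \<ge> 3"
    and x: "x \<in> feasible_set d m n example_matrix b" and y: "y \<in> feasible_set d m n example_matrix b"
    and "x 1 \<le> y 1"
  shows "(solution_edge n (feasible_set d m n example_matrix b))\<^sup>*\<^sup>* x y"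
proof -
  let ?R = "feasible_set d m n example_matrix b"
  note feasible_iff = feasible_set_example_matrix_iff[OF assms(1,2)]
  have columns: "1 \<in> {1..n}" "2 \<in> {1..n}" "3 \<in> {1..n}" using assms(2) by auto
  have "x \<in> box d n" "y \<in> box d n" using x y feasible_iff by auto
  then have y_range: "0 \<le> y j" "y j \<le> int d" if "j \<in> {1..n}" for j
    using that unfolding box_def by auto
  have x_rows: "b 3 \<le> x 1 - x 3" "b 4 \<le> x 1 + x 3"
    and y_rows: "b 1 \<le> - y 1 - y 2" "b 2 \<le> y 2 - y 1"
    and zero_rows: "\<forall>i\<in>{5..m}. b i \<le> 0"
    using x y unfolding feasible_iff by blast+
  define z1 where "z1 = x(2 := y 2)"
  define z2 where "z2 = z1(1 := y 1)"
  define z3 where "z3 = z2(3 := y 3)"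
  have "z1 \<in> box d n" "z2 \<in> box d n" "z3 \<in> box d n"
    using box_fun_upd[OF \<open>x \<in> box d n\<close> columns(2) y_range[OF columns(2)]]
      box_fun_upd[OF _ columns(1) y_range[OF columns(1)]]
      box_fun_upd[OF _ columns(3) y_range[OF columns(3)]]
    unfolding z3_def z2_def z1_def by blast+
  have "real_of_int (x 1) \<le> real_of_int (y 1)" using \<open>x 1 \<le> y 1\<close> by simp
  then have z1_feasible: "z1 \<in> ?R" and z2_feasible: "z2 \<in> ?R"
    using \<open>z1 \<in> box d n\<close> \<open>z2 \<in> box d n\<close> x_rows y_rows zero_rows
    unfolding feasible_iff by (simp add: z1_def, simp add: z2_def z1_def)
  have z3_agrees: "z3 j = y j" if "j \<in> {1, 2, 3}" for j
    using that unfolding z3_def z2_def z1_def by auto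
  have z3_feasible: "z3 \<in> ?R"
    by (rule feasible_set_change_zero_columns[OF y \<open>z3 \<in> box d n\<close>])
      (metis z3_agrees example_matrix_zero_column)
  have "(solution_edge n ?R)\<^sup>*\<^sup>* x z1"
    by (rule solution_path_single_coordinate[OF x z1_feasible columns(2)]) (simp add: z1_def)
  also have "(solution_edge n ?R)\<^sup>*\<^sup>* z1 z2"
    by (rule solution_path_single_coordinate[OF z1_feasible z2_feasible columns(1)]) (simp add: z2_def)
  also have "(solution_edge n ?R)\<^sup>*\<^sup>* z2 z3"
    by (rule solution_path_single_coordinate[OF z2_feasible z3_feasible columns(3)]) (simp add: z3_def)
  also have "(solution_edge n ?R)\<^sup>*\<^sup>* z3 y"
    by (rule solution_path_zero_columns[OF z3_feasible y])
      (metis z3_agrees example_matrix_zero_column)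
  finally show ?thesis .
qed

lemma solution_graph_connected_example_matrix:
  assumes "m \<ge> 4" "n \<ge> 3"
  shows "solution_graph_connected n (feasible_set d m n example_matrix b)"
  unfolding solution_graph_connected_iff
proof (intro ballI)
  fix x y assume "x \<in> feasible_set d m n example_matrix b" "y \<in> feasible_set d m n example_matrix b"
  then show "(solution_edge n (feasible_set d m n example_matrix b))\<^sup>*\<^sup>* x y"
  proof (cases "x 1 \<le> y 1")
    case False
    then show ?thesis using solution_path_example_matrix[OF assms \<open>y \<in> _\<close> \<open>x \<in> _\<close>]
      sympD[OF symp_rtranclp[OF symp_solution_edge]] by simp
  qed (rule solution_path_example_matrix[OF assms])
qed

theorem theorem1:
  fixes m n d :: nat
  assumes "m \<ge> 4" and "n \<ge> 3" and "d \<ge> 1"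
  shows "\<exists>A :: nat \<Rightarrow> nat \<Rightarrow> real.
           \<not> has_elimination_ordering m n A \<and>
           (\<forall>b :: nat \<Rightarrow> real. solution_graph_connected n (feasible_set d m n A b))"
proof (intro exI conjI allI)
  show "\<not> has_elimination_ordering m n example_matrix"
    using blocked_columns_no_elimination_ordering[OF blocked_columns_example_matrix[OF assms(1)]]
      assms(2) by simp
  show "solution_graph_connected n (feasible_set d m n example_matrix b)" for b
    using solution_graph_connected_example_matrix[OF assms(1,2)] .
qed

end
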